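(* Let $\alpha\in(0,1)$. For every $\varepsilon>0$ and every natural number $n_0$ there exist natural numbers $n$ and $N$ with $n_0\le n<N$, and random variables $\mathcal{A}_n,\mathcal{A}_{n+1},\dots,\mathcal{A}_N$ (defined on a common probability space) whose values are subsets of $\mathbb{B}^n,\mathbb{B}^{n+1},\dots,\mathbb{B}^N$ respectively, such that: (1) the size of $\mathcal{A}_i$ never exceeds $2^{\alpha i}$, for each $i\in\{n,\dots,N\}$; (2) for every binary string $x$ of length $N$, the probability of the event "for some $i\in\{n,\dots,N\}$, some element of $\mathcal{A}_i$ is a substring of $x$" exceeds $1-\varepsilon$.
   Context: $\mathbb{B}^m$ denotes the set of binary strings of length $m$. A substring of $x$ means a contiguous block $x_j x_{j+1}\dots x_{j+\ell-1}$ of consecutive symbols of $x$. *)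

theory Defs
  imports "HOL-Probability.Probability" "HOL-Library.Sublist"
begin

end

theory Submission
  imports Defs
begin

(*
  Fix scales m 0 < m 1 < ... < m K with m (k+1) = t k * m k.  For a string x of length m K, the
  normalized entropies ln |substrings x (m k)| / m k fall from at most ln 2 to at least 0, so at some
  level k they drop by at most ln 2 / K.  There, a uniformly random concatenation of t k
  substrings of x of length m k is itself a substring of x with probability at least
  2 powr (- m (k+1) / K).  The random family therefore guesses, for every level k and every
  possible set T of words of length m k, about c * 2 powr (m (k+1) / K) independent random
  concatenations of words of T; when T is the true substring set one of them hits x except with
  probability at most exp (- c), while the total number of guesses at level k + 1 is only
  2 ^ 2 ^ m k times that, which is below 2 powr (alpha * m (k+1)) once t k is large.
*)

definition substrings :: "'a list \<Rightarrow> nat \<Rightarrow> 'a list set" where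
  "substrings x n = {y. sublist y x \<and> length y = n}"

definition concats :: "'a list set \<Rightarrow> nat \<Rightarrow> 'a list set" where
  "concats T t = concat ` {ws. set ws \<subseteq> T \<and> length ws = t}"

lemma card_bool_lists_length: "card {xs :: bool list. length xs = n} = 2 ^ n"
  using card_lists_length_eq[of "UNIV :: bool set" n] by simp

lemma finite_bool_lists_length: "finite {xs :: bool list. length xs = n}"
  using finite_lists_length_eq[of "UNIV :: bool set" n] by simp

lemma substrings_subset_lists_length: "substrings x n \<subseteq> {y. length y = n}"
  by (auto simp: substrings_def)

lemma finite_substrings [simp]: "finite (substrings (x :: bool list) n)"
  by (rule finite_subset[OF substrings_subset_lists_length finite_bool_lists_length])

lemma card_substrings_le: "card (substrings (x :: bool list) n) \<le> 2 ^ n"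
  using card_mono[OF finite_bool_lists_length substrings_subset_lists_length]
  by (simp add: card_bool_lists_length)

lemma card_substrings_pos: "n \<le> length x \<Longrightarrow> 0 < card (substrings (x :: bool list) n)"
proof -
  assume "n \<le> length x"
  then have "take n x \<in> substrings x n" by (simp add: substrings_def)
  then show ?thesis using finite_substrings[of x n] by (auto simp: card_gt_0_iff)
qed

lemma finite_concats: "finite T \<Longrightarrow> finite (concats T t)"
  unfolding concats_def by (intro finite_imageI finite_lists_length_eq)

lemma concats_nonempty: "T \<noteq> {} \<Longrightarrow> concats T t \<noteq> {}"
proof -
  assume "T \<noteq> {}"
  then obtain a where "a \<in> T" by blast
  then have "concat (replicate t a) \<in> concats T t" unfolding concats_def by (intro imageI) auto
  then show ?thesis by blast
qed

lemma card_concats_le: "finite T \<Longrightarrow> card (concats T t) \<le> card T ^ t"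
  unfolding concats_def
  using card_image_le[OF finite_lists_length_eq[of T t], of concat] by (simp add: card_lists_length_eq)

lemma concats_subset_lists_length:
  "T \<subseteq> {y. length y = n} \<Longrightarrow> concats T t \<subseteq> {y. length y = t * n}"
proof -
  assume T: "T \<subseteq> {y. length y = n}"
  have "length (concat ws) = length ws * n" if "set ws \<subseteq> T" for ws
    using that T by (induction ws) auto
  then show ?thesis by (auto simp: concats_def)
qed

lemma substrings_mult_subset_concats: "substrings x (t * n) \<subseteq> concats (substrings x n) t"
proof
  fix y assume "y \<in> substrings x (t * n)"
  then show "y \<in> concats (substrings x n) t"
  proof (induction t arbitrary: y)
    case 0
    then show ?case by (auto simp: substrings_def concats_def intro!: image_eqI[of _ _ "[]"])
  next
    case (Suc t)
    then have "sublist y x" "length y = n + t * n" by (auto simp: substrings_def)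
    then have tail: "drop n y \<in> substrings x (t * n)" and head: "take n y \<in> substrings x n"
      by (auto simp: substrings_def intro: sublist_order.order_trans[OF sublist_drop]
          sublist_order.order_trans[OF sublist_take])
    then obtain ws where ws: "set ws \<subseteq> substrings x n" "length ws = t" "drop n y = concat ws"
      using Suc.IH[OF tail] by (auto simp: concats_def)
    have "y = concat (take n y # ws)" by (simp add: ws(3)[symmetric])
    then show ?case
      unfolding concats_def using head ws by (intro image_eqI[of y concat "take n y # ws"]) simp_all
  qed
qed

lemma exists_small_decrement:
  fixes \<rho> :: "nat \<Rightarrow> real"
  assumes "0 < K" and "\<rho> 0 - \<rho> K \<le> d"
  shows "\<exists>k<K. \<rho> k - \<rho> (Suc k) \<le> d / K"
proof (rule ccontr)
  assume "\<not> ?thesis"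
  then have "(\<Sum>k<K. d / K) < (\<Sum>k<K. \<rho> k - \<rho> (Suc k))"
    using assms(1) by (intro sum_strict_mono) auto
  also have "\<dots> = \<rho> 0 - \<rho> K" by (rule sum_lessThan_telescope')
  finally show False using assms by simp
qed

lemma exists_level_substrings_grow:
  fixes x :: "bool list" and m t :: "nat \<Rightarrow> nat"
  assumes "0 < K"
    and m_Suc: "\<And>k. m (Suc k) = t k * m k"
    and m_pos: "\<And>k. k \<le> K \<Longrightarrow> 0 < m k"
    and m_le: "\<And>k. k \<le> K \<Longrightarrow> m k \<le> length x"
  shows "\<exists>k<K. real (card (substrings x (m k))) ^ t k
                \<le> 2 powr (real (m (Suc k)) / K) * card (substrings x (m (Suc k)))"
proof -
  define a where "a k = real (card (substrings x (m k)))" for k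
  define \<rho> where "\<rho> k = ln (a k) / m k" for k
  have a_pos: "0 < a k" if "k \<le> K" for k
    using card_substrings_pos[OF m_le[OF that]] by (simp add: a_def)
  have "ln (a 0) \<le> ln (2 ^ m 0)"
    using a_pos[of 0] card_substrings_le[of x "m 0"] by (simp add: a_def)
  then have "\<rho> 0 \<le> ln 2"
    using m_pos[of 0] by (simp add: \<rho>_def ln_realpow field_simps)
  moreover have "0 \<le> \<rho> K"
    using a_pos[of K] card_substrings_pos[OF m_le[of K]] by (simp add: \<rho>_def a_def)
  ultimately obtain k where k: "k < K" and drop: "\<rho> k - \<rho> (Suc k) \<le> ln 2 / K"
    using exists_small_decrement[OF \<open>0 < K\<close>, of \<rho> "ln 2"] by auto
  have "t k * ln (a k) - ln (a (Suc k)) = m (Suc k) * (\<rho> k - \<rho> (Suc k))"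
    using m_pos[of k] m_pos[of "Suc k"] k unfolding \<rho>_def m_Suc by (simp add: field_simps)
  also have "\<dots> \<le> m (Suc k) * (ln 2 / K)" using drop by (intro mult_left_mono) auto
  finally have "ln (a k ^ t k) \<le> ln (2 powr (m (Suc k) / K) * a (Suc k))"
    using a_pos[of k] a_pos[of "Suc k"] k by (simp add: ln_realpow ln_mult ln_powr)
  then have "a k ^ t k \<le> 2 powr (m (Suc k) / K) * a (Suc k)"
    using a_pos[of k] a_pos[of "Suc k"] k by simp
  then show ?thesis using k unfolding a_def by blast
qed

lemma exists_multiplier_powr_dominates:
  fixes \<alpha> \<beta> D :: real and n :: nat
  assumes "\<beta> < \<alpha>" and "0 < n"
  shows "\<exists>t\<ge>2. D * 2 powr (\<beta> * real (t * n)) \<le> 2 powr (\<alpha> * real (t * n))"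
proof -
  obtain t0 :: nat where t0: "log 2 \<bar>D\<bar> / (\<alpha> - \<beta>) \<le> t0" using real_arch_simple by blast
  define t where "t = max t0 2"
  define L where "L = real (t * n)"
  have "t0 \<le> t" by (simp add: t_def)
  also have "t \<le> t * n" using \<open>0 < n\<close> by simp
  finally have "real t0 \<le> L" unfolding L_def of_nat_le_iff .
  then have log_D: "log 2 \<bar>D\<bar> \<le> (\<alpha> - \<beta>) * L"
    using t0 assms(1) by (simp add: divide_le_eq mult.commute order_trans)
  have "D \<le> 2 powr ((\<alpha> - \<beta>) * L)"
  proof (cases "D = 0")
    case False
    then have "D \<le> 2 powr (log 2 \<bar>D\<bar>)" by simp
    also have "\<dots> \<le> 2 powr ((\<alpha> - \<beta>) * L)" using log_D by (intro powr_mono) auto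
    finally show ?thesis .
  qed simp
  then have "D * 2 powr (\<beta> * L) \<le> 2 powr ((\<alpha> - \<beta>) * L) * 2 powr (\<beta> * L)"
    by (intro mult_right_mono) auto
  also have "\<dots> = 2 powr (\<alpha> * L)" by (simp add: powr_add[symmetric] algebra_simps)
  finally show ?thesis unfolding L_def by (intro exI[of _ t]) (auto simp: t_def)
qed

lemma measure_Pi_pmf_all_in:
  assumes "finite I" and "J \<subseteq> I"
  shows "measure_pmf.prob (Pi_pmf I d p) {\<omega>. \<forall>z\<in>J. \<omega> z \<in> B z}
           = (\<Prod>z\<in>J. measure_pmf.prob (p z) (B z))"
proof -
  define B' where "B' z = (if z \<in> J then B z else UNIV)" for z
  have "{\<omega>. \<forall>z\<in>J. \<omega> z \<in> B z} = Pi I B'" using assms(2) by (auto simp: B'_def Pi_def)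
  then have "measure_pmf.prob (Pi_pmf I d p) {\<omega>. \<forall>z\<in>J. \<omega> z \<in> B z}
               = (\<Prod>z\<in>I. measure_pmf.prob (p z) (B' z))"
    using measure_Pi_pmf_Pi[OF assms(1)] by simp
  also have "\<dots> = (\<Prod>z\<in>J. measure_pmf.prob (p z) (B' z))"
    using assms by (intro prod.mono_neutral_right) (auto simp: B'_def)
  also have "\<dots> = (\<Prod>z\<in>J. measure_pmf.prob (p z) (B z))"
    by (simp add: B'_def)
  finally show ?thesis .
qed

locale substring_hitting =
  fixes K :: nat and m t :: "nat \<Rightarrow> nat" and c :: real
  assumes K_pos: "0 < K" and c_pos: "0 < c"
    and m_0_pos: "0 < m 0" and m_Suc: "m (Suc k) = t k * m k" and t_ge_2: "2 \<le> t k"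
begin

lemma m_pos: "0 < m k"
proof (induction k)
  case (Suc k)
  then show ?case using t_ge_2[of k] by (simp add: m_Suc)
qed (rule m_0_pos)

lemma strict_mono_m: "strict_mono m"
proof (rule strict_monoI_Suc)
  fix k
  have "1 * m k < 2 * m k" using m_pos[of k] by simp
  also have "\<dots> \<le> m (Suc k)" unfolding m_Suc by (intro mult_right_mono t_ge_2) simp
  finally show "m k < m (Suc k)" by simp
qed

definition M :: "nat \<Rightarrow> nat" where
  "M k = nat \<lceil>c * 2 powr (real (m (Suc k)) / K)\<rceil>"

text \<open>
  Trial \<open>(k, T, j)\<close> is the \<open>j\<close>-th of \<open>M k\<close> independent guesses at level \<open>k\<close>: the set \<open>T\<close> is a
  guess for the substrings of length \<open>m k\<close> of the unknown string, and the trial outputs a uniformly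
  random concatenation of \<open>t k\<close> words of \<open>T\<close>, a candidate substring of length \<open>m (Suc k)\<close>.\<close>
definition trials :: "(nat \<times> bool list set \<times> nat) set" where
  "trials = (SIGMA k:{..<K}. {T. T \<noteq> {} \<and> T \<subseteq> {y. length y = m k}} \<times> {..<M k})"

definition trial :: "nat \<times> bool list set \<times> nat \<Rightarrow> bool list pmf" where
  "trial = (\<lambda>(k, T, _). pmf_of_set (concats T (t k)))"

definition samples :: "(nat \<times> bool list set \<times> nat \<Rightarrow> bool list) pmf" where
  "samples = Pi_pmf trials [] trial"

definition family :: "(nat \<times> bool list set \<times> nat \<Rightarrow> bool list) \<Rightarrow> nat \<Rightarrow> bool list set" where
  "family \<omega> i = \<omega> ` {z \<in> trials. m (Suc (fst z)) = i}"

definition family_pmf :: "(nat \<Rightarrow> bool list set) pmf" where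
  "family_pmf = map_pmf family samples"

lemma finite_trials: "finite trials"
  unfolding trials_def
  by (intro finite_SigmaI finite_cartesian_product finite_subset[OF _ finite_Pow_iff[THEN iffD2,
        OF finite_bool_lists_length]]) auto

lemma set_pmf_trial:
  assumes "(k, T, j) \<in> trials"
  shows "set_pmf (trial (k, T, j)) \<subseteq> {y. length y = m (Suc k)}"
proof -
  have T: "T \<noteq> {}" "T \<subseteq> {y. length y = m k}" using assms by (auto simp: trials_def)
  then have "finite T" using finite_subset finite_bool_lists_length by blast
  then have "set_pmf (trial (k, T, j)) = concats T (t k)"
    using T by (simp add: trial_def finite_concats concats_nonempty)
  then show ?thesis using concats_subset_lists_length[OF T(2)] by (simp add: m_Suc)
qed

lemma set_pmf_family_pmfE:
  assumes "A \<in> set_pmf family_pmf"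
  obtains \<omega> where "A = family \<omega>" and "\<And>z. z \<in> trials \<Longrightarrow> \<omega> z \<in> set_pmf (trial z)"
  using assms set_Pi_pmf[OF finite_trials, of "[]" trial]
  by (auto simp: family_pmf_def samples_def PiE_dflt_def)

lemma family_lengths:
  assumes "A \<in> set_pmf family_pmf"
  shows "A i \<subseteq> {y. length y = i}"
proof -
  obtain \<omega> where "A = family \<omega>" and "\<And>z. z \<in> trials \<Longrightarrow> \<omega> z \<in> set_pmf (trial z)"
    using set_pmf_family_pmfE[OF assms] by blast
  then show ?thesis using set_pmf_trial by (fastforce simp: family_def)
qed

lemma family_outside_levels:
  assumes "A \<in> set_pmf family_pmf" and "\<And>k. k < K \<Longrightarrow> i \<noteq> m (Suc k)"
  shows "A i = {}"
proof -
  obtain \<omega> where "A = family \<omega>" using set_pmf_family_pmfE[OF assms(1)] by blast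
  then show ?thesis using assms(2) by (auto simp: family_def trials_def)
qed

lemma card_family_level:
  assumes "A \<in> set_pmf family_pmf" and "k < K"
  shows "card (A (m (Suc k))) \<le> 2 ^ 2 ^ m k * (c + 1) * 2 powr (real (m (Suc k)) / K)"
proof -
  define L where "L = m (Suc k)"
  obtain \<omega> where A: "A = family \<omega>" using set_pmf_family_pmfE[OF assms(1)] by blast
  have "card (A L) \<le> card {z \<in> trials. m (Suc (fst z)) = L}"
    unfolding A family_def by (intro card_image_le) (simp add: finite_trials)
  also have "\<dots> \<le> card ({k} \<times> Pow {y :: bool list. length y = m k} \<times> {..<M k})"
    using strict_mono_eq[OF strict_mono_m]
    by (intro card_mono) (auto simp: trials_def L_def finite_bool_lists_length)
  also have "\<dots> = 2 ^ 2 ^ m k * M k"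
    by (simp add: card_cartesian_product card_Pow card_bool_lists_length finite_bool_lists_length)
  finally have "real (card (A L)) \<le> real (2 ^ 2 ^ m k * M k)"
    by (simp only: of_nat_le_iff)
  also have "\<dots> \<le> 2 ^ 2 ^ m k * (c * 2 powr (L / K) + 1)"
    using c_pos by (simp add: M_def L_def of_int_ceiling_le_add_one)
  also have "\<dots> \<le> 2 ^ 2 ^ m k * ((c + 1) * 2 powr (L / K))"
    using c_pos by (intro mult_left_mono) (auto simp: algebra_simps ge_one_powr_ge_zero)
  finally show ?thesis by (simp add: L_def)
qed

lemma prob_level_all_in:
  assumes "k < K" and "T \<noteq> {}" and "T \<subseteq> {y. length y = m k}"
  shows "measure_pmf.prob samples {\<omega>. \<forall>j<M k. \<omega> (k, T, j) \<in> B}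
           = measure_pmf.prob (pmf_of_set (concats T (t k))) B ^ M k"
proof -
  define J where "J = (\<lambda>j. (k, T, j)) ` {..<M k}"
  have "J \<subseteq> trials" using assms by (auto simp: J_def trials_def)
  moreover have "{\<omega>. \<forall>j<M k. \<omega> (k, T, j) \<in> B} = {\<omega>. \<forall>z\<in>J. \<omega> z \<in> B}" by (auto simp: J_def)
  ultimately have "measure_pmf.prob samples {\<omega>. \<forall>j<M k. \<omega> (k, T, j) \<in> B}
                     = (\<Prod>z\<in>J. measure_pmf.prob (trial z) B)"
    using measure_Pi_pmf_all_in[OF finite_trials] by (simp add: samples_def)
  also have "\<dots> = (\<Prod>j<M k. measure_pmf.prob (trial (k, T, j)) B)"
    unfolding J_def by (subst prod.reindex) (auto simp: inj_on_def)
  finally show ?thesis by (simp add: trial_def)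
qed

lemma prob_level_misses:
  assumes "k < K" and "T \<noteq> {}" and "T \<subseteq> {y. length y = m k}"
    and "S \<subseteq> concats T (t k)"
    and "card (concats T (t k)) \<le> 2 powr (real (m (Suc k)) / K) * card S"
  shows "measure_pmf.prob samples {\<omega>. \<forall>j<M k. \<omega> (k, T, j) \<notin> S} \<le> exp (- c)"
proof -
  define C where "C = concats T (t k)"
  define q where "q = card S / card C"
  define P where "P = 2 powr (real (m (Suc k)) / K)"
  have "finite T" using assms(3) finite_subset finite_bool_lists_length by blast
  then have C: "finite C" "0 < card C"
    using assms(2) by (auto simp: C_def finite_concats concats_nonempty card_gt_0_iff)
  have SC: "S \<subseteq> C" using assms(4) by (simp add: C_def)
  then have "card S \<le> card C" using C(1) by (simp add: card_mono)
  then have q_le_1: "q \<le> 1" using C by (simp add: q_def)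
  have "measure_pmf.prob (pmf_of_set C) (- S) = card (C - S) / card C"
    using C by (subst measure_pmf_of_set) (auto simp: Diff_eq card_gt_0_iff)
  also have "card (C - S) = card C - card S"
    using SC C(1) by (simp add: card_Diff_subset finite_subset)
  also have "real (card C - card S) / card C = 1 - q"
    using \<open>card S \<le> card C\<close> C by (simp add: q_def of_nat_diff diff_divide_distrib card_gt_0_iff)
  finally have miss: "measure_pmf.prob (pmf_of_set C) (- S) = 1 - q" .
  have "1 \<le> q * P" using assms(5) C by (simp add: q_def P_def C_def field_simps)
  have "c * P \<le> M k" by (simp add: M_def P_def real_nat_ceiling_ge)
  have "0 \<le> q" by (simp add: q_def)
  have "c \<le> c * (q * P)" using \<open>1 \<le> q * P\<close> c_pos by simp
  also have "\<dots> = q * (c * P)" by simp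
  also have "\<dots> \<le> q * M k" using \<open>c * P \<le> M k\<close> \<open>0 \<le> q\<close> by (rule mult_left_mono)
  finally have "c \<le> q * M k" .
  have "measure_pmf.prob samples {\<omega>. \<forall>j<M k. \<omega> (k, T, j) \<notin> S} = (1 - q) ^ M k"
    using prob_level_all_in[OF assms(1-3), of "- S"] miss by (simp add: C_def)
  also have "\<dots> \<le> exp (- q) ^ M k"
    using q_le_1 exp_ge_add_one_self[of "- q"] by (intro power_mono) auto
  also have "\<dots> = exp (- (q * M k))" by (simp add: exp_of_nat_mult[symmetric] algebra_simps)
  also have "\<dots> \<le> exp (- c)" using \<open>c \<le> q * M k\<close> by simp
  finally show ?thesis .
qed

lemma prob_family_hits:
  assumes "length x = m K"
  shows "1 - exp (- c) \<le> measure_pmf.prob family_pmf {A. \<exists>i\<in>{m 1..m K}. \<exists>y\<in>A i. sublist y x}"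
    (is "_ \<le> measure_pmf.prob _ ?hit")
proof -
  have m_le: "m k \<le> length x" if "k \<le> K" for k
    using that assms strict_mono_m by (simp add: strict_mono_less_eq)
  have "\<exists>k<K. real (card (substrings x (m k))) ^ t k
                \<le> 2 powr (real (m (Suc k)) / K) * card (substrings x (m (Suc k)))"
    by (intro exists_level_substrings_grow K_pos m_Suc m_pos m_le)
  then obtain k where k: "k < K" and grow: "real (card (substrings x (m k))) ^ t k
                \<le> 2 powr (real (m (Suc k)) / K) * card (substrings x (m (Suc k)))"
    by blast
  define T where "T = substrings x (m k)"
  define S where "S = substrings x (m (Suc k))"
  define Miss where "Miss = {\<omega>. \<forall>j<M k. \<omega> (k, T, j) \<notin> S}"
  have T: "T \<noteq> {}" "T \<subseteq> {y. length y = m k}"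
    using card_substrings_pos[of "m k" x] m_le[of k] k substrings_subset_lists_length
    by (auto simp: T_def)
  have "real (card (concats T (t k))) \<le> real (card T) ^ t k"
    using card_concats_le[of T "t k"] by (simp only: T_def finite_substrings of_nat_power[symmetric] of_nat_le_iff)
  also have "\<dots> \<le> 2 powr (real (m (Suc k)) / K) * card S"
    using grow by (simp only: T_def S_def)
  finally have "card (concats T (t k)) \<le> 2 powr (real (m (Suc k)) / K) * card S" .
  moreover have "S \<subseteq> concats T (t k)"
    unfolding S_def T_def m_Suc by (rule substrings_mult_subset_concats)
  ultimately have miss: "measure_pmf.prob samples Miss \<le> exp (- c)"
    using prob_level_misses[OF k T] by (simp add: Miss_def)
  have hit: "- Miss \<subseteq> family -` ?hit"
  proof
    fix \<omega> assume "\<omega> \<in> - Miss"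
    then obtain j where "j < M k" and "\<omega> (k, T, j) \<in> S" by (auto simp: Miss_def)
    moreover have "(k, T, j) \<in> trials" using k T \<open>j < M k\<close> by (simp add: trials_def)
    moreover have "m (Suc k) \<in> {m 1..m K}"
      using k strict_mono_m by (simp add: strict_mono_less_eq)
    ultimately show "\<omega> \<in> family -` ?hit"
      unfolding family_def S_def substrings_def by force
  qed
  have "1 - exp (- c) \<le> 1 - measure_pmf.prob samples Miss" using miss by simp
  also have "\<dots> = measure_pmf.prob samples (- Miss)"
    using measure_pmf.prob_compl[of Miss samples] by (simp add: Compl_eq_Diff_UNIV)
  also have "\<dots> \<le> measure_pmf.prob samples (family -` ?hit)"
    by (rule measure_pmf.finite_measure_mono[OF hit]) simp
  finally show ?thesis by (simp add: family_pmf_def)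
qed

end

lemma exists_substring_hitting_scales:
  fixes \<alpha> c :: real and K n0 :: nat
  assumes "0 < K" and "1 / K < \<alpha>" and "0 < c"
  obtains m t where "substring_hitting K m t c" and "n0 < m 1"
    and "\<And>k. 2 ^ 2 ^ m k * (c + 1) * 2 powr (real (m (Suc k)) / K) \<le> 2 powr (\<alpha> * m (Suc k))"
proof -
  define mult where "mult s = (SOME t. 2 \<le> t \<and>
      2 ^ 2 ^ s * (c + 1) * 2 powr (1 / K * real (t * s)) \<le> 2 powr (\<alpha> * real (t * s)))" for s
  have mult: "2 \<le> mult s \<and>
      2 ^ 2 ^ s * (c + 1) * 2 powr (1 / K * real (mult s * s)) \<le> 2 powr (\<alpha> * real (mult s * s))"
    if "0 < s" for s
    unfolding mult_def by (rule someI_ex) (rule exists_multiplier_powr_dominates[OF assms(2) that])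
  define m where "m = rec_nat (Suc n0) (\<lambda>_ s. mult s * s)"
  have m_Suc: "m (Suc k) = mult (m k) * m k" for k by (simp add: m_def)
  have m_pos: "0 < m k" for k
  proof (induction k)
    case (Suc k)
    then show ?case using mult[OF Suc] by (simp add: m_Suc)
  qed (simp add: m_def)
  interpret substring_hitting K m "\<lambda>k. mult (m k)" c
    using assms m_pos mult by unfold_locales (auto simp: m_Suc)
  show thesis
  proof
    show "substring_hitting K m (\<lambda>k. mult (m k)) c" ..
    show "n0 < m 1" using strict_monoD[OF strict_mono_m, of 0 1] by (simp add: m_def)
    show "2 ^ 2 ^ m k * (c + 1) * 2 powr (real (m (Suc k)) / K) \<le> 2 powr (\<alpha> * m (Suc k))" for k
      using mult[OF m_pos[of k]] by (simp add: m_Suc)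
  qed
qed

theorem lemma3:
  fixes \<alpha> \<epsilon> :: real and n0 :: nat
  assumes "0 < \<alpha>" and "\<alpha> < 1" and "\<epsilon> > 0"
  shows "\<exists>n N (p :: (nat \<Rightarrow> bool list set) pmf).
           n0 \<le> n \<and> n < N \<and>
           (\<forall>A \<in> set_pmf p. \<forall>i \<in> {n..N}.
               A i \<subseteq> {x. length x = i} \<and> real (card (A i)) \<le> 2 powr (\<alpha> * real i)) \<and>
           (\<forall>x :: bool list. length x = N \<longrightarrow>
               measure_pmf.prob p {A. \<exists>i \<in> {n..N}. \<exists>y \<in> A i. sublist y x} > 1 - \<epsilon>)"
proof -
  obtain K :: nat where K: "2 / \<alpha> \<le> K" using real_arch_simple by blast
  have "2 < 2 / \<alpha>" using assms(1,2) by (simp add: field_simps)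
  with K have "2 < real K" by linarith
  then have "2 \<le> K" by simp
  have "1 / K < \<alpha>" using K assms(1) \<open>2 < real K\<close> by (simp add: field_simps)
  define c where "c = \<bar>ln \<epsilon>\<bar> + 1"
  have "exp (- c) < \<epsilon>" using assms(3) exp_less_cancel_iff[of "- c" "ln \<epsilon>"] by (simp add: c_def)
  obtain m t where "substring_hitting K m t c" and "n0 < m 1" and size:
      "\<And>k. 2 ^ 2 ^ m k * (c + 1) * 2 powr (real (m (Suc k)) / K) \<le> 2 powr (\<alpha> * m (Suc k))"
    by (rule exists_substring_hitting_scales[of K \<alpha> c n0])
      (use \<open>2 \<le> K\<close> \<open>1 / K < \<alpha>\<close> in \<open>auto simp: c_def\<close>)
  then interpret substring_hitting K m t c by simp
  show ?thesis
  proof (intro exI conjI ballI allI impI)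
    show "n0 \<le> m 1" and "m 1 < m K"
      using \<open>n0 < m 1\<close> \<open>2 \<le> K\<close> strict_mono_m by (auto simp: strict_mono_less)
    fix A i assume A: "A \<in> set_pmf family_pmf"
    show "A i \<subseteq> {x. length x = i}" using family_lengths[OF A] .
    show "real (card (A i)) \<le> 2 powr (\<alpha> * real i)"
    proof (cases "\<exists>k<K. i = m (Suc k)")
      case True
      then show ?thesis using card_family_level[OF A] size order_trans by blast
    qed (use family_outside_levels[OF A] in auto)
  next
    fix x :: "bool list" assume "length x = m K"
    then show "measure_pmf.prob family_pmf {A. \<exists>i\<in>{m 1..m K}. \<exists>y\<in>A i. sublist y x} > 1 - \<epsilon>"
      using prob_family_hits \<open>exp (- c) < \<epsilon>\<close> by fastforce
  qed
qed

end
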